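(* Let $n\ge 2$, let $M_1,\ldots,M_k\in\mathrm{H}(n,\mathbb{Q}(\mathrm{i}))$ be such that $M_1M_2\cdots M_k\in\Omega$, and let $\ell\ge1$ be an integer. Write $\psi(M_i)=(\boldsymbol{a}_i,\boldsymbol{b}_i,c_i)$ for $i=1,\ldots,k$. Then \[(M_1^\ell M_2^\ell\cdots M_k^\ell)_{1,n}=\ell\sum_{i=1}^k\Big(c_i-\tfrac12\boldsymbol{a}_i^T\boldsymbol{b}_i\Big)+\frac{\ell^2}{2}\sum_{1\le i<j\le k-1}[M_i,M_j].\]
   Context: $\mathbb{Q}(\mathrm{i})=\{a+b\mathrm{i}\mid a,b\in\mathbb{Q}\}$. $\mathrm{H}(n,\mathbb{Q}(\mathrm{i}))$ is the set of $n\times n$ matrices $M=\begin{pmatrix}1&\boldsymbol{m}_1^T&m_3\\ \boldsymbol{0}&\boldsymbol{I}_{n-2}&\boldsymbol{m}_2\\ 0&\boldsymbol{0}^T&1\end{pmatrix}$ with $\boldsymbol{m}_1,\boldsymbol{m}_2\in\mathbb{Q}(\mathrm{i})^{n-2}$, $m_3\in\mathbb{Q}(\mathrm{i})$, and $\psi(M)=(\boldsymbol{m}_1,\boldsymbol{m}_2,m_3)$. $\Omega$ is the set of such matrices with $\boldsymbol{m}_1=\boldsymbol{m}_2=\boldsymbol{0}$. $X_{1,n}$ is the top-right entry of $X$. For $M_i,M_j$ with $\psi(M_i)=(\boldsymbol{a}_i,\boldsymbol{b}_i,c_i)$, $\psi(M_j)=(\boldsymbol{a}_j,\boldsymbol{b}_j,c_j)$,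 the commutator is the scalar $[M_i,M_j]=\boldsymbol{a}_i^T\boldsymbol{b}_j-\boldsymbol{a}_j^T\boldsymbol{b}_i\in\mathbb{Q}(\mathrm{i})$ (transpose without conjugation). *)

theory Defs
  imports Complex_Main "Jordan_Normal_Form.Matrix"
begin

definition QI :: "complex set" where
  "QI = {z. Re z \<in> \<rat> \<and> Im z \<in> \<rat>}"

text \<open>H(n,Q(i)), with 0-based indices 0..n-1: unit diagonal, entries in Q(i),
  nonzero off-diagonal entries only in the first row (index 0) or last column (index n-1).\<close>
definition heis :: "nat \<Rightarrow> complex mat set" where
  "heis n = {M. M \<in> carrier_mat n n \<and>
     (\<forall>i<n. \<forall>j<n. M $$ (i,j) \<in> QI) \<and>
     (\<forall>i<n. M $$ (i,i) = 1) \<and>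
     (\<forall>i<n. \<forall>j<n. i \<noteq> j \<and> i \<noteq> 0 \<and> j \<noteq> n - 1 \<longrightarrow> M $$ (i,j) = 0)}"

definition Omega :: "nat \<Rightarrow> complex mat set" where
  "Omega n = {M \<in> heis n. \<forall>t. 0 < t \<and> t < n - 1 \<longrightarrow> M $$ (0,t) = 0 \<and> M $$ (t,n-1) = 0}"

text \<open>psi(M) = (m1, m2, m3): m1 = first row entries 1..n-2, m2 = last column entries 1..n-2,
  m3 = top-right entry.  dotab n A B = a_A^T b_B (no conjugation).\<close>
definition dotab :: "nat \<Rightarrow> complex mat \<Rightarrow> complex mat \<Rightarrow> complex" where
  "dotab n A B = (\<Sum>t\<in>{1..<n-1}. A $$ (0,t) * B $$ (t,n-1))"

definition psi_c :: "nat \<Rightarrow> complex mat \<Rightarrow> complex" where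
  "psi_c n A = A $$ (0, n-1)"

definition hcomm :: "nat \<Rightarrow> complex mat \<Rightarrow> complex mat \<Rightarrow> complex" where
  "hcomm n A B = dotab n A B - dotab n B A"

definition mprod :: "nat \<Rightarrow> nat \<Rightarrow> (nat \<Rightarrow> complex mat) \<Rightarrow> complex mat" where
  "mprod n k M = foldr (\<lambda>i acc. M i * acc) [1..<k+1] (1\<^sub>m n)"

end

(*
  Write (a, b, c) for the matrix with first row a, last column b and corner c.  These
  multiply as (a, b, c) (a', b', c') = (a + a', b + b', c + c' + a^T b'), so
  M^l = (l a, l b, l c + l(l-1)/2 a^T b), and the corner of M_1 ... M_k is
  sum_i c_i + sum_{i<j} a_i^T b_j.  Membership of the product in Omega says that
  sum_i a_i = sum_i b_i = 0.  Expanding 0 = (sum_i a_i)^T (sum_j b_j) then gives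
  2 sum_{i<j} a_i^T b_j = - sum_i a_i^T b_i + sum_{i<j} [M_i, M_j], and the commutators
  involving M_k cancel, again because both sums vanish.
*)
theory Submission
  imports Defs
begin

text \<open>The matrix M with \<open>\<psi>(M) = (a, b, c)\<close>; only the values of a and b at the
  indices 1..n-2 matter.\<close>
definition heis_mat :: "nat \<Rightarrow> (nat \<Rightarrow> 'a) \<Rightarrow> (nat \<Rightarrow> 'a) \<Rightarrow> 'a \<Rightarrow> 'a :: {zero,one} mat" where
  "heis_mat n a b c = mat n n (\<lambda>(i,j). if i = j then 1 else if i = 0 \<and> j = n-1 then c
      else if i = 0 then a j else if j = n-1 then b i else 0)"

definition dot_mid :: "nat \<Rightarrow> (nat \<Rightarrow> 'a) \<Rightarrow> (nat \<Rightarrow> 'a) \<Rightarrow> 'a :: semiring_0" where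
  "dot_mid n a b = (\<Sum>t\<in>{1..<n-1}. a t * b t)"

lemma dim_heis_mat [simp]: "dim_row (heis_mat n a b c) = n" "dim_col (heis_mat n a b c) = n"
  by (simp_all add: heis_mat_def)

lemma index_heis_mat:
  "i < n \<Longrightarrow> j < n \<Longrightarrow> heis_mat n a b c $$ (i,j) = (if i = j then 1 else if i = 0 \<and> j = n-1 then c
      else if i = 0 then a j else if j = n-1 then b i else 0)"
  by (simp add: heis_mat_def)

lemma heis_mat_first_row: "0 < j \<Longrightarrow> j < n-1 \<Longrightarrow> heis_mat n a b c $$ (0,j) = a j"
  by (simp add: index_heis_mat)

lemma heis_mat_last_col: "0 < i \<Longrightarrow> i < n-1 \<Longrightarrow> heis_mat n a b c $$ (i,n-1) = b i"
  by (simp add: index_heis_mat)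

lemma heis_mat_corner: "2 \<le> n \<Longrightarrow> heis_mat n a b c $$ (0, n-1) = c"
  by (simp add: index_heis_mat)

lemma heis_mat_zero: "heis_mat n (\<lambda>_. 0) (\<lambda>_. 0) 0 = 1\<^sub>m n"
  by (rule eq_matI) (auto simp: heis_mat_def)

lemma heis_eq_heis_mat:
  assumes "M \<in> heis n"
  shows "M = heis_mat n (\<lambda>j. M $$ (0,j)) (\<lambda>i. M $$ (i,n-1)) (M $$ (0,n-1))"
  using assms by (intro eq_matI) (auto simp: heis_def index_heis_mat)

lemma dot_mid_scale:
  fixes a b :: "nat \<Rightarrow> 'a :: comm_semiring_0"
  shows "dot_mid n (\<lambda>t. x * a t) (\<lambda>t. y * b t) = x * y * dot_mid n a b"
  by (simp add: dot_mid_def sum_distrib_left mult_ac)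

lemma dot_mid_sum_right: "dot_mid n a (\<lambda>t. \<Sum>j\<in>J. b j t) = (\<Sum>j\<in>J. dot_mid n a (b j))"
  by (simp add: dot_mid_def sum_distrib_left sum.swap[of _ J])

lemma dotab_eq_dot_mid: "dotab n A B = dot_mid n (\<lambda>t. A $$ (0,t)) (\<lambda>t. B $$ (t,n-1))"
  by (simp add: dotab_def dot_mid_def)

lemma sum_lessThan_split_ends:
  fixes n :: nat
  assumes "2 \<le> n"
  shows "(\<Sum>r<n. f r) = f 0 + f (n-1) + (\<Sum>r\<in>{1..<n-1}. f r)"
proof -
  have "{..<n} = insert 0 (insert (n-1) {1..<n-1})" using assms by auto
  then show ?thesis using assms by (simp add: add.assoc)
qed

lemma heis_mat_mult:
  fixes a b a' b' :: "nat \<Rightarrow> 'a :: semiring_1"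
  assumes "2 \<le> n"
  shows "heis_mat n a b c * heis_mat n a' b' c' =
    heis_mat n (\<lambda>j. a j + a' j) (\<lambda>i. b i + b' i) (c + c' + dot_mid n a b')"
    (is "?A * ?B = ?C")
proof (rule eq_matI)
  fix i j assume "i < dim_row ?C" "j < dim_col ?C"
  then have ij: "i < n" "j < n" by auto
  have mid: "(\<Sum>r\<in>{1..<n-1}. ?A $$ (i,r) * ?B $$ (r,j)) =
    (\<Sum>r\<in>{1..<n-1}. if i = 0 \<and> j = n-1 then a r * b' r
       else if i = 0 then (if r = j then a r else 0)
       else if j = n-1 then (if r = i then b' r else 0)
       else if r = i then (if i = j then 1 else 0) else 0)"
    using ij by (intro sum.cong) (auto simp: index_heis_mat)
  have "(?A * ?B) $$ (i,j) = (\<Sum>r<n. ?A $$ (i,r) * ?B $$ (r,j))"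
    using ij by (simp add: scalar_prod_def lessThan_atLeast0)
  also have "\<dots> = ?C $$ (i,j)"
    unfolding sum_lessThan_split_ends[OF assms] mid using ij assms
    by (cases "i = 0"; cases "i = n-1"; cases "j = 0"; cases "j = n-1")
       (auto simp: index_heis_mat dot_mid_def add_ac)
  finally show "(?A * ?B) $$ (i,j) = ?C $$ (i,j)" .
qed auto

lemma heis_mat_power:
  fixes a b :: "nat \<Rightarrow> 'a :: field_char_0"
  assumes "2 \<le> n"
  shows "heis_mat n a b c ^\<^sub>m l = heis_mat n (\<lambda>j. of_nat l * a j) (\<lambda>i. of_nat l * b i)
           (of_nat l * c + of_nat l * (of_nat l - 1) / 2 * dot_mid n a b)"
proof (induction l)
  case 0
  show ?case by (simp add: heis_mat_zero)
next
  case (Suc l)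
  have "dot_mid n (\<lambda>j. of_nat l * a j) b = of_nat l * dot_mid n a b"
    using dot_mid_scale[of n "of_nat l" a 1 b] by simp
  then show ?case
    by (simp add: Suc heis_mat_mult[OF assms]) (simp add: field_simps)
qed

lemma foldr_heis_mat:
  fixes a b :: "nat \<Rightarrow> nat \<Rightarrow> 'a :: semiring_1"
  assumes "2 \<le> n" "m \<le> Suc k" "\<forall>i\<in>{m..k}. M i = heis_mat n (a i) (b i) (c i)"
  shows "foldr (\<lambda>i acc. M i * acc) [m..<Suc k] (1\<^sub>m n) =
    heis_mat n (\<lambda>t. \<Sum>i=m..k. a i t) (\<lambda>t. \<Sum>i=m..k. b i t)
      ((\<Sum>i=m..k. c i) + (\<Sum>i=m..k. \<Sum>j=i+1..k. dot_mid n (a i) (b j)))"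
  using assms(2,3)
proof (induction m rule: inc_induct)
  case base
  show ?case by (simp add: heis_mat_zero)
next
  case (step m)
  have sum_first: "(\<Sum>i=m..k. f i) = f m + (\<Sum>i=Suc m..k. f i)" for f :: "nat \<Rightarrow> 'b :: comm_monoid_add"
    using step.hyps by (simp add: sum.atLeast_Suc_atMost)
  show ?case
    using step
    by (simp del: upt_Suc
        add: upt_conv_Cons sum_first heis_mat_mult[OF assms(1)] dot_mid_sum_right algebra_simps)
qed

lemma mprod_heis_mat:
  assumes "2 \<le> n" "\<forall>i\<in>{1..k}. M i = heis_mat n (a i) (b i) (c i)"
  shows "mprod n k M =
    heis_mat n (\<lambda>t. \<Sum>i=1..k. a i t) (\<lambda>t. \<Sum>i=1..k. b i t)
      ((\<Sum>i=1..k. c i) + (\<Sum>i=1..k. \<Sum>j=i+1..k. dot_mid n (a i) (b j)))"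
  using foldr_heis_mat[of n 1 k] assms by (simp del: upt_Suc add: mprod_def)

lemma mprod_in_Omega_zero_sums:
  assumes "2 \<le> n" "\<forall>i\<in>{1..k}. M i = heis_mat n (a i) (b i) (c i)"
    and "mprod n k M \<in> Omega n" "t \<in> {1..<n-1}"
  shows "(\<Sum>i=1..k. a i t) = 0" "(\<Sum>i=1..k. b i t) = 0"
proof -
  note prod_eq = mprod_heis_mat[OF assms(1,2)]
  have "mprod n k M $$ (0,t) = (\<Sum>i=1..k. a i t)" "mprod n k M $$ (t,n-1) = (\<Sum>i=1..k. b i t)"
    unfolding prod_eq using assms(4) by (intro heis_mat_first_row heis_mat_last_col; simp)+
  then show "(\<Sum>i=1..k. a i t) = 0" "(\<Sum>i=1..k. b i t) = 0"
    using assms(3,4) by (auto simp: Omega_def)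
qed

lemma mprod_power_corner:
  fixes l :: nat
  assumes "2 \<le> n" "\<forall>i\<in>{1..k}. M i = heis_mat n (a i) (b i) (c i)"
  defines "L \<equiv> of_nat l :: complex"
  shows "mprod n k (\<lambda>i. M i ^\<^sub>m l) $$ (0, n-1) =
    L * (\<Sum>i=1..k. c i) + L * (L - 1) / 2 * (\<Sum>i=1..k. dot_mid n (a i) (b i))
      + L^2 * (\<Sum>i=1..k. \<Sum>j=i+1..k. dot_mid n (a i) (b j))"
proof -
  have "mprod n k (\<lambda>i. M i ^\<^sub>m l) = heis_mat n (\<lambda>t. \<Sum>i=1..k. L * a i t) (\<lambda>t. \<Sum>i=1..k. L * b i t)
      ((\<Sum>i=1..k. L * c i + L * (L - 1) / 2 * dot_mid n (a i) (b i)) +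
       (\<Sum>i=1..k. \<Sum>j=i+1..k. dot_mid n (\<lambda>t. L * a i t) (\<lambda>t. L * b j t)))"
    (is "_ = heis_mat n _ _ ?corner")
    using assms(2) heis_mat_power[OF assms(1)] unfolding L_def
    by (intro mprod_heis_mat[OF assms(1)]) auto
  then have "mprod n k (\<lambda>i. M i ^\<^sub>m l) $$ (0, n-1) = ?corner"
    using heis_mat_corner[OF assms(1)] by simp
  also have "?corner = L * (\<Sum>i=1..k. c i) + L * (L - 1) / 2 * (\<Sum>i=1..k. dot_mid n (a i) (b i))
      + L^2 * (\<Sum>i=1..k. \<Sum>j=i+1..k. dot_mid n (a i) (b j))"
    by (simp add: dot_mid_scale sum.distrib sum_distrib_left power2_eq_square)
  finally show ?thesis .
qed

lemma sum_upper_triangle_Suc: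
  "(\<Sum>i=1..Suc k. \<Sum>j=i+1..Suc k. f i j) = (\<Sum>i=1..k. \<Sum>j=i+1..k. f i j) + (\<Sum>i=1..k. f i (Suc k))"
proof -
  have "(\<Sum>i=1..Suc k. \<Sum>j=i+1..Suc k. f i j) = (\<Sum>i=1..k. \<Sum>j=i+1..Suc k. f i j)"
    by simp
  also have "\<dots> = (\<Sum>i=1..k. (\<Sum>j=i+1..k. f i j) + f i (Suc k))"
    by (intro sum.cong) auto
  finally show ?thesis by (simp add: sum.distrib)
qed

lemma sum_diag_upper_triangle:
  fixes x y :: "nat \<Rightarrow> 'a :: comm_ring_1"
  shows "(\<Sum>i=1..k. x i * y i) + 2 * (\<Sum>i=1..k. \<Sum>j=i+1..k. x i * y j) =
    (\<Sum>i=1..k. x i) * (\<Sum>i=1..k. y i) + (\<Sum>i=1..k. \<Sum>j=i+1..k. x i * y j - x j * y i)"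
proof (induction k)
  case 0
  show ?case by simp
next
  case (Suc k)
  have "(\<Sum>i=1..k. x i * y (Suc k) - x (Suc k) * y i) =
      (\<Sum>i=1..k. x i) * y (Suc k) - x (Suc k) * (\<Sum>i=1..k. y i)"
    by (simp add: sum_subtractf sum_distrib_left sum_distrib_right)
  then show ?case
    unfolding sum_upper_triangle_Suc
    using Suc by (simp add: sum_distrib_right[symmetric] algebra_simps)
qed

lemma sum_diag_upper_triangle_zero_sums:
  fixes x y :: "nat \<Rightarrow> 'a :: comm_ring_1"
  assumes "(\<Sum>i=1..k. x i) = 0" "(\<Sum>i=1..k. y i) = 0"
  shows "(\<Sum>i=1..k. x i * y i) + 2 * (\<Sum>i=1..k. \<Sum>j=i+1..k. x i * y j) =
    (\<Sum>i=1..k-1. \<Sum>j=i+1..k-1. x i * y j - x j * y i)"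
proof (cases k)
  case 0
  then show ?thesis by simp
next
  case (Suc m)
  have sums: "(\<Sum>i=1..m. x i) = - x k" "(\<Sum>i=1..m. y i) = - y k"
    using assms Suc by (simp_all add: eq_neg_iff_add_eq_0)
  have upper: "(\<Sum>i=1..k. \<Sum>j=i+1..k. x i * y j) = (\<Sum>i=1..m. \<Sum>j=i+1..m. x i * y j) - x k * y k"
    unfolding Suc sum_upper_triangle_Suc sum_distrib_right[symmetric] sums by simp
  have diag: "(\<Sum>i=1..k. x i * y i) = (\<Sum>i=1..m. x i * y i) + x k * y k"
    using Suc by simp
  show ?thesis
    unfolding upper diag using sum_diag_upper_triangle[of x y m] sums Suc
    by (simp add: algebra_simps)
qed

lemma sum_dot_mid_zero_sums:
  fixes a b :: "nat \<Rightarrow> nat \<Rightarrow> 'a :: comm_ring_1"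
  assumes "\<And>t. t \<in> {1..<n-1} \<Longrightarrow> (\<Sum>i=1..k. a i t) = 0"
    and "\<And>t. t \<in> {1..<n-1} \<Longrightarrow> (\<Sum>i=1..k. b i t) = 0"
  shows "(\<Sum>i=1..k. dot_mid n (a i) (b i)) + 2 * (\<Sum>i=1..k. \<Sum>j=i+1..k. dot_mid n (a i) (b j)) =
    (\<Sum>i=1..k-1. \<Sum>j=i+1..k-1. dot_mid n (a i) (b j) - dot_mid n (a j) (b i))"
proof -
  have swap: "(\<Sum>i\<in>I. \<Sum>j\<in>J i. \<Sum>t\<in>T. f i j t) = (\<Sum>t\<in>T. \<Sum>i\<in>I. \<Sum>j\<in>J i. f i j t)"
    for I T :: "nat set" and J :: "nat \<Rightarrow> nat set" and f :: "nat \<Rightarrow> nat \<Rightarrow> nat \<Rightarrow> 'a"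
    by (subst sum.swap) (intro sum.cong refl sum.swap)
  have "(\<Sum>i=1..k. dot_mid n (a i) (b i)) + 2 * (\<Sum>i=1..k. \<Sum>j=i+1..k. dot_mid n (a i) (b j)) =
      (\<Sum>t\<in>{1..<n-1}. (\<Sum>i=1..k. a i t * b i t) + 2 * (\<Sum>i=1..k. \<Sum>j=i+1..k. a i t * b j t))"
    unfolding dot_mid_def swap sum.distrib sum_distrib_left sum.swap[of _ "{1..k}"] ..
  also have "\<dots> = (\<Sum>t\<in>{1..<n-1}. \<Sum>i=1..k-1. \<Sum>j=i+1..k-1. a i t * b j t - a j t * b i t)"
    using assms by (intro sum.cong refl sum_diag_upper_triangle_zero_sums) auto
  also have "\<dots> = (\<Sum>i=1..k-1. \<Sum>j=i+1..k-1. dot_mid n (a i) (b j) - dot_mid n (a j) (b i))"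
    unfolding dot_mid_def swap sum_subtractf ..
  finally show ?thesis .
qed

theorem lemma3:
  fixes n k l :: nat and M :: "nat \<Rightarrow> complex mat"
  assumes "n \<ge> 2"
    and "\<forall>i\<in>{1..k}. M i \<in> heis n"
    and "mprod n k M \<in> Omega n"
    and "l \<ge> 1"
  shows "(mprod n k (\<lambda>i. M i ^\<^sub>m l)) $$ (0, n-1) =
           of_nat l * (\<Sum>i=1..k. psi_c n (M i) - 1/2 * dotab n (M i) (M i))
           + (of_nat l)^2 / 2 * (\<Sum>i=1..k-1. \<Sum>j=i+1..k-1. hcomm n (M i) (M j))"
proof -
  \<comment> \<open>The identity holds for \<open>l = 0\<close> as well.\<close>
  define a where "a i t = M i $$ (0,t)" for i t
  define b where "b i t = M i $$ (t,n-1)" for i t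
  define c where "c i = M i $$ (0,n-1)" for i
  define D where "D = (\<Sum>i=1..k. dot_mid n (a i) (b i))"
  define U where "U = (\<Sum>i=1..k. \<Sum>j=i+1..k. dot_mid n (a i) (b j))"
  define Q where "Q = (\<Sum>i=1..k-1. \<Sum>j=i+1..k-1. dot_mid n (a i) (b j) - dot_mid n (a j) (b i))"
  have M_eq: "\<forall>i\<in>{1..k}. M i = heis_mat n (a i) (b i) (c i)"
    using assms(2) heis_eq_heis_mat unfolding a_def b_def c_def by blast
  have key: "D + 2 * U = Q"
    unfolding D_def U_def Q_def using mprod_in_Omega_zero_sums[OF assms(1) M_eq assms(3)]
    by (intro sum_dot_mid_zero_sums)
  have psi_sum: "(\<Sum>i=1..k. psi_c n (M i) - 1/2 * dotab n (M i) (M i)) = (\<Sum>i=1..k. c i) - D / 2"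
    unfolding D_def psi_c_def dotab_eq_dot_mid a_def b_def c_def
    by (simp add: sum_subtractf sum_divide_distrib)
  have hcomm_sum: "(\<Sum>i=1..k-1. \<Sum>j=i+1..k-1. hcomm n (M i) (M j)) = Q"
    unfolding Q_def hcomm_def dotab_eq_dot_mid a_def b_def ..
  show ?thesis
    unfolding mprod_power_corner[OF assms(1) M_eq] psi_sum hcomm_sum key[symmetric]
      D_def[symmetric] U_def[symmetric]
    by (simp add: field_simps power2_eq_square)
qed

end
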